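(* Let $q$ be a prime with $q \equiv 3 \pmod 4$ and define $\phi:\mathbb{F}_q \to SO(2,q)\setminus\{I\}$ by $$\phi(r) = \begin{pmatrix} \frac{r^2-1}{r^2+1} & \frac{-2r}{r^2+1} \\ \frac{2r}{r^2+1} & \frac{r^2-1}{r^2+1}\end{pmatrix}.$$ For $x,y \in \mathbb{F}_q^2$, the set $l_{x\to y} = \{(p,r) \in \mathbb{F}_q^2\times\mathbb{F}_q : f_{p,\phi(r)}(x) = y\}$ is an (affine) line in $\mathbb{F}_q^3$.
   Context: $SO(2,q) = \{A \in \mathrm{Mat}_2(\mathbb{F}_q) : A^TA = I, \det A = 1\}$; since $-1$ is not a square in $\mathbb{F}_q$, $r^2+1 \neq 0$ for all $r$, so $\phi$ is well defined. For $p \in \mathbb{F}_q^2$ and $\theta \in SO(2,q)$, $f_{p,\theta}(x) = \theta(x-p)+p$. Points $(p,r)$ with $p \in \mathbb{F}_q^2$, $r\in\mathbb{F}_q$ are identified with points of $\mathbb{F}_q^3$. *)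

theory Defs
  imports "HOL-Library.Cardinality" "HOL-Computational_Algebra.Primes"
begin

text \<open>The field F_q is modelled as a finite field type 'a with CARD('a) = q.
  Points of F_q^2 are pairs; 2x2 matrices are pairs of rows;
  points (p,r) of F_q^2 x F_q are identified with points of F_q^3.\<close>

type_synonym 'a mat2 = "('a \<times> 'a) \<times> ('a \<times> 'a)"

definition mat_app :: "'a::comm_ring_1 mat2 \<Rightarrow> 'a \<times> 'a \<Rightarrow> 'a \<times> 'a" where
  "mat_app M v = (fst (fst M) * fst v + snd (fst M) * snd v,
                  fst (snd M) * fst v + snd (snd M) * snd v)"

definition SO2 :: "'a::comm_ring_1 mat2 set" where
  "SO2 = {M. let a = fst (fst M); b = snd (fst M); c = fst (snd M); d = snd (snd M) in
             a*a + c*c = 1 \<and> a*b + c*d = 0 \<and> b*b + d*d = 1 \<and> a*d - b*c = 1}"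

definition phi :: "'a::field \<Rightarrow> 'a mat2" where
  "phi r = (((r^2 - 1) / (r^2 + 1), (- 2 * r) / (r^2 + 1)),
            ((2 * r) / (r^2 + 1), (r^2 - 1) / (r^2 + 1)))"

text \<open>f_{p,theta}(x) = theta(x - p) + p\<close>
definition rot_about :: "'a::comm_ring_1 \<times> 'a \<Rightarrow> 'a mat2 \<Rightarrow> 'a \<times> 'a \<Rightarrow> 'a \<times> 'a" where
  "rot_about p \<theta> x =
     (let w = mat_app \<theta> (fst x - fst p, snd x - snd p) in (fst w + fst p, snd w + snd p))"

definition l_to :: "'a::field \<times> 'a \<Rightarrow> 'a \<times> 'a \<Rightarrow> (('a \<times> 'a) \<times> 'a) set" where
  "l_to x y = {(p, r). rot_about p (phi r) x = y}"

definition affine_line3 :: "(('a::field \<times> 'a) \<times> 'a) set \<Rightarrow> bool" where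
  "affine_line3 L \<longleftrightarrow> (\<exists>a1 a2 a3 v1 v2 v3. (v1, v2, v3) \<noteq> (0, 0, 0) \<and>
      L = {((a1 + t * v1, a2 + t * v2), a3 + t * v3) | t. True})"

end

theory Submission
  imports Defs "HOL-Number_Theory.Residues"
begin

text \<open>Identifying the plane with a quadratic extension, \<open>\<phi>(r)\<close> is multiplication by
  \<open>(r + i)/(r - i)\<close>, where \<open>i\<^sup>2 = -1\<close> and \<open>i\<close> acts as the quarter turn \<open>J(a, b) = (-b, a)\<close>;
  this makes sense because \<open>r\<^sup>2 + 1 \<noteq> 0\<close> when \<open>q \<equiv> 3 (mod 4)\<close>.
  Clearing the denominator, \<open>f_{p,\<phi>(r)}(x) = y\<close> becomes \<open>(r + J)(x - p) = (r - J)(y - p)\<close>,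
  which is linear in \<open>(p, r)\<close> and solves to \<open>p = (x + y)/2 + r J(y - x)/2\<close>.\<close>

lemma finite_field_power_card_minus_one:
  fixes a :: "'a::{field,finite}"
  assumes "a \<noteq> 0"
  shows "a ^ (CARD('a) - 1) = 1"
proof -
  define U where "U = (UNIV :: 'a set) - {0}"
  have "bij_betw ((*) a) U U"
    unfolding U_def by (rule bij_betw_byWitness[where f' = "\<lambda>b. b / a"]) (use assms in auto)
  then have "prod id U = prod ((*) a) U"
    using prod.reindex_bij_betw[of "(*) a" U U id] by simp
  also have "\<dots> = a ^ card U * prod id U"
    by (simp add: prod.distrib)
  finally have "a ^ card U = 1"
    by (simp add: U_def)
  moreover have "card U = CARD('a) - 1"
    by (simp add: U_def card_Diff_singleton)
  ultimately show ?thesis by simp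
qed

lemma two_neq_zero_if_odd_card:
  assumes "odd CARD('a::{field,finite})"
  shows "(2::'a) \<noteq> 0"
proof
  assume "(2::'a) = 0"
  then have "CHAR('a) dvd 2"
    by (metis of_nat_eq_0_iff_char_dvd of_nat_numeral)
  then have "CHAR('a) = 2"
    using two_is_prime_nat prime_nat_iff CHAR_not_1[where 'a='a] by (metis One_nat_def)
  with CHAR_dvd_CARD[where 'a='a] assms show False
    by simp
qed

lemma square_plus_one_neq_zero:
  fixes r :: "'a::{field,finite}"
  assumes "CARD('a) mod 4 = 3"
  shows "r\<^sup>2 + 1 \<noteq> 0"
proof
  assume "r\<^sup>2 + 1 = 0"
  then have r2: "r\<^sup>2 = -1"
    by (simp add: eq_neg_iff_add_eq_0)
  define k where "k = CARD('a) div 4"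
  have k: "CARD('a) - 1 = 2 * (2 * k + 1)"
    using assms unfolding k_def by presburger
  have "r \<noteq> 0"
    using r2 by auto
  then have "1 = (r\<^sup>2) ^ (2 * k + 1)"
    using finite_field_power_card_minus_one by (metis k power_mult)
  also have "\<dots> = -1"
    by (simp add: r2)
  finally have "(2::'a) = 0"
    by (metis add.right_inverse one_add_one)
  moreover have "odd CARD('a)"
    using assms by presburger
  ultimately show False
    using two_neq_zero_if_odd_card by blast
qed

lemma mat_app_phi_eq_iff:
  fixes r :: "'a::field"
  assumes "r\<^sup>2 + 1 \<noteq> 0"
  shows "mat_app (phi r) (w1, w2) = (z1, z2) \<longleftrightarrow>
    r * w1 - w2 = r * z1 + z2 \<and> w1 + r * w2 = r * z2 - z1"
proof -
  define s where "s = r\<^sup>2 + 1"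
  define F1 where "F1 = r * w1 - w2 - (r * z1 + z2)"
  define F2 where "F2 = w1 + r * w2 - (r * z2 - z1)"
  have "mat_app (phi r) (w1, w2) = (((r\<^sup>2 - 1) * w1 - 2 * r * w2) / s, (2 * r * w1 + (r\<^sup>2 - 1) * w2) / s)"
    by (simp add: mat_app_def phi_def s_def algebra_simps diff_divide_distrib add_divide_distrib)
  then have "mat_app (phi r) (w1, w2) = (z1, z2) \<longleftrightarrow>
      (r\<^sup>2 - 1) * w1 - 2 * r * w2 = s * z1 \<and> 2 * r * w1 + (r\<^sup>2 - 1) * w2 = s * z2"
    using assms by (simp add: s_def divide_eq_eq mult.commute)
  \<comment> \<open>this system reads \<open>(r + J)F = 0\<close>; multiplying by \<open>r - J\<close> gives \<open>s F = 0\<close>\<close>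
  also have "\<dots> \<longleftrightarrow> r * F1 - F2 = 0 \<and> r * F2 + F1 = 0"
    by (simp add: F1_def F2_def s_def algebra_simps power2_eq_square)
  also have "\<dots> \<longleftrightarrow> F1 = 0 \<and> F2 = 0"
  proof
    assume E: "r * F1 - F2 = 0 \<and> r * F2 + F1 = 0"
    have "s * F1 = r * (r * F1 - F2) + (r * F2 + F1)" "s * F2 = r * (r * F2 + F1) - (r * F1 - F2)"
      by (simp_all add: s_def algebra_simps power2_eq_square)
    with E assms show "F1 = 0 \<and> F2 = 0"
      by (simp add: s_def)
  qed simp
  finally show ?thesis
    by (simp add: F1_def F2_def)
qed

lemma rot_about_phi_eq_iff:
  fixes r :: "'a::field"
  assumes "r\<^sup>2 + 1 \<noteq> 0"
  shows "rot_about (p1, p2) (phi r) (x1, x2) = (y1, y2) \<longleftrightarrow>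
    2 * p1 = x1 + y1 - r * (y2 - x2) \<and> 2 * p2 = x2 + y2 + r * (y1 - x1)"
proof -
  have "rot_about (p1, p2) (phi r) (x1, x2) = (y1, y2) \<longleftrightarrow>
      mat_app (phi r) (x1 - p1, x2 - p2) = (y1 - p1, y2 - p2)"
    by (auto simp: rot_about_def Let_def prod_eq_iff algebra_simps)
  also have "\<dots> \<longleftrightarrow> 2 * p1 = x1 + y1 - r * (y2 - x2) \<and> 2 * p2 = x2 + y2 + r * (y1 - x1)"
    unfolding mat_app_phi_eq_iff[OF assms] by (auto simp: algebra_simps)
  finally show ?thesis .
qed

theorem lemma2p2:
  fixes x y :: "'a::{field,finite} \<times> 'a"
  assumes "prime (CARD('a))" and "CARD('a) mod 4 = 3"
  shows "affine_line3 (l_to x y)"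
proof -
  obtain x1 x2 y1 y2 where xy: "x = (x1, x2)" "y = (y1, y2)"
    by (cases x, cases y)
  have two: "(2::'a) \<noteq> 0"
    using assms(2) by (intro two_neq_zero_if_odd_card) presburger
  define a1 where "a1 = (x1 + y1) / 2"
  define a2 where "a2 = (x2 + y2) / 2"
  define v1 where "v1 = - (y2 - x2) / 2"
  define v2 where "v2 = (y1 - x1) / 2"
  have line: "a1 + r * v1 = (x1 + y1 - r * (y2 - x2)) / 2" "a2 + r * v2 = (x2 + y2 + r * (y1 - x1)) / 2"
    for r
    by (simp_all add: a1_def a2_def v1_def v2_def add_divide_distrib diff_divide_distrib algebra_simps)
  have "rot_about (p1, p2) (phi r) x = y \<longleftrightarrow> p1 = a1 + r * v1 \<and> p2 = a2 + r * v2" for p1 p2 r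
  proof -
    have "rot_about (p1, p2) (phi r) x = y \<longleftrightarrow>
        2 * p1 = x1 + y1 - r * (y2 - x2) \<and> 2 * p2 = x2 + y2 + r * (y1 - x1)"
      unfolding xy by (rule rot_about_phi_eq_iff[OF square_plus_one_neq_zero[OF assms(2)]])
    also have "\<dots> \<longleftrightarrow> p1 = a1 + r * v1 \<and> p2 = a2 + r * v2"
      unfolding line using two by (simp add: eq_divide_eq mult.commute[of _ 2])
    finally show ?thesis .
  qed
  then have "l_to x y = {((a1 + t * v1, a2 + t * v2), 0 + t * 1) | t. True}"
    by (auto simp: l_to_def)
  moreover have "(v1, v2, 1::'a) \<noteq> (0, 0, 0)"
    by simp
  ultimately show ?thesis
    unfolding affine_line3_def by blast
qed

end
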